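(* Let $(\mathsf P,\mathcal O)$ be a semitopology and $p\in\mathsf P$. The following are equivalent: (1) $p$ is regular, i.e. $p\in K(p)$ and $K(p)$ is topen; (2) $K(p)$ is a greatest topen neighbourhood of $p$; (3) $K(p)$ is a maximal topen neighbourhood of $p$; (4) $p$ has a maximal topen neighbourhood; (5) $p$ has some topen neighbourhood (a topen set containing $p$).
   Context: A semitopology is a pair $(\mathsf P,\mathcal O)$ where $\mathsf P$ is a set and $\mathcal O\subseteq\mathcal P(\mathsf P)$ contains $\varnothing$ and $\mathsf P$ and is closed under arbitrary unions. Write $X\between Y$ when $X\cap Y\neq\varnothing$. A set $T$ is transitive when for all $O,O'\in\mathcal O$, $O\between T\between O'$ implies $O\between O'$; topen means nonempty, open and transitive. Points $p,p'$ are intertwined when every open set containing $p$ intersects every open set containing $p'$; $I(p)$ denotes the set of points intertwined with $p$. The interior $\mathrm{int}(R)$ of $R\subseteq\mathsf P$ is the union of all open sets contained in $R$. The community of $p$ is $K(p)=\mathrm{int}(I(p))$. A topen neighbourhood of $p$ is a topen set containing $p$. *)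

theory Defs
  imports Main
begin

definition semitopology :: "'a set \<Rightarrow> 'a set set \<Rightarrow> bool" where
  "semitopology P Opn \<longleftrightarrow> Opn \<subseteq> Pow P \<and> {} \<in> Opn \<and> P \<in> Opn \<and> (\<forall>S. S \<subseteq> Opn \<longrightarrow> \<Union>S \<in> Opn)"

definition between :: "'a set \<Rightarrow> 'a set \<Rightarrow> bool" where
  "between X Y \<longleftrightarrow> X \<inter> Y \<noteq> {}"

definition transitive_set :: "'a set set \<Rightarrow> 'a set \<Rightarrow> bool" where
  "transitive_set Opn T \<longleftrightarrow>
     (\<forall>A\<in>Opn. \<forall>B\<in>Opn. between A T \<and> between T B \<longrightarrow> between A B)"

definition topen :: "'a set set \<Rightarrow> 'a set \<Rightarrow> bool" where
  "topen Opn T \<longleftrightarrow> T \<noteq> {} \<and> T \<in> Opn \<and> transitive_set Opn T"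

definition intertwined :: "'a set set \<Rightarrow> 'a \<Rightarrow> 'a \<Rightarrow> bool" where
  "intertwined Opn p q \<longleftrightarrow> (\<forall>A\<in>Opn. \<forall>B\<in>Opn. p \<in> A \<and> q \<in> B \<longrightarrow> between A B)"

definition intertwined_set :: "'a set \<Rightarrow> 'a set set \<Rightarrow> 'a \<Rightarrow> 'a set" where
  "intertwined_set P Opn p = {q \<in> P. intertwined Opn p q}"

definition interior :: "'a set set \<Rightarrow> 'a set \<Rightarrow> 'a set" where
  "interior Opn R = \<Union>{A \<in> Opn. A \<subseteq> R}"

definition community :: "'a set \<Rightarrow> 'a set set \<Rightarrow> 'a \<Rightarrow> 'a set" where
  "community P Opn p = interior Opn (intertwined_set P Opn p)"

definition regular :: "'a set \<Rightarrow> 'a set set \<Rightarrow> 'a \<Rightarrow> bool" where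
  "regular P Opn p \<longleftrightarrow> p \<in> community P Opn p \<and> topen Opn (community P Opn p)"

definition topen_nbhd :: "'a set set \<Rightarrow> 'a \<Rightarrow> 'a set \<Rightarrow> bool" where
  "topen_nbhd Opn p T \<longleftrightarrow> topen Opn T \<and> p \<in> T"

definition greatest_topen_nbhd :: "'a set set \<Rightarrow> 'a \<Rightarrow> 'a set \<Rightarrow> bool" where
  "greatest_topen_nbhd Opn p T \<longleftrightarrow> topen_nbhd Opn p T \<and> (\<forall>T'. topen_nbhd Opn p T' \<longrightarrow> T' \<subseteq> T)"

definition maximal_topen_nbhd :: "'a set set \<Rightarrow> 'a \<Rightarrow> 'a set \<Rightarrow> bool" where
  "maximal_topen_nbhd Opn p T \<longleftrightarrow> topen_nbhd Opn p T \<and> (\<forall>T'. topen_nbhd Opn p T' \<and> T \<subseteq> T' \<longrightarrow> T' = T)"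

end

theory Submission
  imports Defs
begin

text \<open>Any two points of an open transitive set are intertwined, so a topen neighbourhood of p
  lies inside I(p) and, being open, inside K(p). Moreover, if T is a topen neighbourhood
  of p, then every open set meeting I(p) meets T, so transitivity of T passes to I(p) and hence
  to its subset K(p). Thus once p has any topen neighbourhood, K(p) is the greatest one, and all
  five conditions collapse.\<close>

lemma interior_in_open:
  assumes "semitopology P Opn"
  shows "interior Opn R \<in> Opn"
  using assms unfolding semitopology_def interior_def by auto

lemma interior_subset: "interior Opn R \<subseteq> R"
  unfolding interior_def by blast

lemma open_subset_interior: "A \<in> Opn \<Longrightarrow> A \<subseteq> R \<Longrightarrow> A \<subseteq> interior Opn R"
  unfolding interior_def by blast

lemma transitive_set_subset:
  assumes "transitive_set Opn T" and "S \<subseteq> T"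
  shows "transitive_set Opn S"
  using assms unfolding transitive_set_def between_def by blast

lemma intertwined_if_transitive_open:
  assumes "T \<in> Opn" and "transitive_set Opn T" and "p \<in> T" and "q \<in> T"
  shows "intertwined Opn p q"
  using assms unfolding intertwined_def transitive_set_def between_def by blast

lemma topen_nbhd_subset_community:
  assumes "semitopology P Opn" and "topen_nbhd Opn p T"
  shows "T \<subseteq> community P Opn p"
proof -
  have T: "T \<in> Opn" "transitive_set Opn T" "p \<in> T"
    using assms(2) by (auto simp: topen_nbhd_def topen_def)
  have "T \<subseteq> intertwined_set P Opn p"
  proof
    fix q assume "q \<in> T"
    then have "q \<in> P"
      using T(1) assms(1) by (auto simp: semitopology_def)
    moreover have "intertwined Opn p q"
      using T \<open>q \<in> T\<close> by (rule intertwined_if_transitive_open)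
    ultimately show "q \<in> intertwined_set P Opn p"
      by (simp add: intertwined_set_def)
  qed
  then show ?thesis
    unfolding community_def by (rule open_subset_interior[OF T(1)])
qed

lemma between_topen_nbhd_if_between_intertwined_set:
  assumes "topen_nbhd Opn p T" and "A \<in> Opn" and "between A (intertwined_set P Opn p)"
  shows "between A T"
proof -
  obtain q where "q \<in> A" "intertwined Opn p q"
    using assms(3) by (auto simp: between_def intertwined_set_def)
  moreover have "T \<in> Opn" "p \<in> T"
    using assms(1) by (auto simp: topen_nbhd_def topen_def)
  ultimately have "between T A"
    using assms(2) by (auto simp: intertwined_def)
  then show ?thesis
    by (auto simp: between_def)
qed

lemma transitive_intertwined_set:
  assumes "topen_nbhd Opn p T"
  shows "transitive_set Opn (intertwined_set P Opn p)"
  unfolding transitive_set_def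
proof (intro ballI impI)
  fix A B
  assume A: "A \<in> Opn" and B: "B \<in> Opn"
    and "between A (intertwined_set P Opn p) \<and> between (intertwined_set P Opn p) B"
  then have "between A T" "between B T"
    using between_topen_nbhd_if_between_intertwined_set[OF assms]
    by (auto simp: Int_commute between_def)
  moreover have "transitive_set Opn T"
    using assms by (simp add: topen_nbhd_def topen_def)
  ultimately show "between A B"
    using A B unfolding transitive_set_def by (auto simp: Int_commute between_def)
qed

lemma greatest_topen_nbhd_community:
  assumes "semitopology P Opn" and "topen_nbhd Opn p T"
  shows "greatest_topen_nbhd Opn p (community P Opn p)"
proof -
  have "p \<in> community P Opn p"
    using topen_nbhd_subset_community[OF assms] assms(2) by (auto simp: topen_nbhd_def)
  moreover have "community P Opn p \<in> Opn"
    unfolding community_def using assms(1) by (rule interior_in_open)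
  moreover have "transitive_set Opn (community P Opn p)"
    using transitive_intertwined_set[OF assms(2)] interior_subset
    unfolding community_def by (rule transitive_set_subset)
  ultimately have "topen_nbhd Opn p (community P Opn p)"
    unfolding topen_nbhd_def topen_def by blast
  then show ?thesis
    unfolding greatest_topen_nbhd_def using topen_nbhd_subset_community[OF assms(1)] by blast
qed

lemma maximal_if_greatest_topen_nbhd:
  "greatest_topen_nbhd Opn p T \<Longrightarrow> maximal_topen_nbhd Opn p T"
  unfolding greatest_topen_nbhd_def maximal_topen_nbhd_def by blast

lemma topen_nbhd_if_maximal:
  "maximal_topen_nbhd Opn p T \<Longrightarrow> topen_nbhd Opn p T"
  unfolding maximal_topen_nbhd_def by blast

lemma regular_iff_greatest_topen_nbhd_community:
  assumes "semitopology P Opn"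
  shows "regular P Opn p \<longleftrightarrow> greatest_topen_nbhd Opn p (community P Opn p)"
proof -
  have "regular P Opn p \<longleftrightarrow> topen_nbhd Opn p (community P Opn p)"
    unfolding regular_def topen_nbhd_def by (rule conj_commute)
  then show ?thesis
    using greatest_topen_nbhd_community[OF assms] unfolding greatest_topen_nbhd_def by blast
qed

theorem theorem4p12:
  fixes P :: "'a set" and Opn :: "'a set set" and p :: 'a
  assumes "semitopology P Opn" and "p \<in> P"
  shows "(regular P Opn p \<longleftrightarrow> greatest_topen_nbhd Opn p (community P Opn p))
       \<and> (greatest_topen_nbhd Opn p (community P Opn p) \<longleftrightarrow> maximal_topen_nbhd Opn p (community P Opn p))
       \<and> (maximal_topen_nbhd Opn p (community P Opn p) \<longleftrightarrow> (\<exists>T. maximal_topen_nbhd Opn p T))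
       \<and> ((\<exists>T. maximal_topen_nbhd Opn p T) \<longleftrightarrow> (\<exists>T. topen_nbhd Opn p T))"
proof -
  let ?K = "community P Opn p"
  have greatest: "greatest_topen_nbhd Opn p ?K" if "topen_nbhd Opn p T" for T
    using assms(1) that by (rule greatest_topen_nbhd_community)
  have "greatest_topen_nbhd Opn p ?K \<longleftrightarrow> maximal_topen_nbhd Opn p ?K"
  proof
    show "maximal_topen_nbhd Opn p ?K" if "greatest_topen_nbhd Opn p ?K"
      using that by (rule maximal_if_greatest_topen_nbhd)
    show "greatest_topen_nbhd Opn p ?K" if "maximal_topen_nbhd Opn p ?K"
      using that by (intro greatest topen_nbhd_if_maximal)
  qed
  moreover have "maximal_topen_nbhd Opn p ?K \<longleftrightarrow> (\<exists>T. maximal_topen_nbhd Opn p T)"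
  proof
    show "\<exists>T. maximal_topen_nbhd Opn p T" if "maximal_topen_nbhd Opn p ?K"
      using that by (rule exI)
    show "maximal_topen_nbhd Opn p ?K" if "\<exists>T. maximal_topen_nbhd Opn p T"
      using that greatest maximal_if_greatest_topen_nbhd topen_nbhd_if_maximal by metis
  qed
  moreover have "(\<exists>T. maximal_topen_nbhd Opn p T) \<longleftrightarrow> (\<exists>T. topen_nbhd Opn p T)"
  proof
    show "\<exists>T. topen_nbhd Opn p T" if "\<exists>T. maximal_topen_nbhd Opn p T"
      using that by (elim exE) (intro exI topen_nbhd_if_maximal)
    show "\<exists>T. maximal_topen_nbhd Opn p T" if "\<exists>T. topen_nbhd Opn p T"
      using that by (elim exE) (intro exI[of _ ?K] maximal_if_greatest_topen_nbhd greatest)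
  qed
  ultimately show ?thesis
    using regular_iff_greatest_topen_nbhd_community[OF assms(1)] by simp
qed

end
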